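(* There is an absolute constant $a>0$ such that the following holds. Let $X$ be a finite or countable set and let $C\subseteq\{0,1\}^X$ be a concept class with VC dimension $d$, $0<d<\infty$, whose dual class $C^*$ has VC dimension $d^*$, $0<d^*<\infty$. Then $C$ has a sample compression scheme of size at most $k\log_2 k$, where $k=a\,d^*d$.
   Context: A concept class is a set $C\subseteq\{0,1\}^X$ of functions $X\to\{0,1\}$. A set $Y\subseteq X$ is $C$-shattered if for every $Z\subseteq Y$ there is $c\in C$ with $c(x)=1$ for all $x\in Z$ and $c(x)=0$ for all $x\in Y\setminus Z$; the VC dimension of $C$ is the maximum size of a $C$-shattered set. The dual class $C^*\subseteq\{0,1\}^C$ is the set of all functions $f_x:C\to\{0,1\}$, $x\in X$, defined by $f_x(c)=c(x)$. A $C$-labeled sample is a pair $(Y,y)$ where $Y$ is a finite multiset of elements of $X$ and $y=c|_Y$ for some $c\in C$; its size is the size of $Y$ as a multiset. $L_C(k)$ denotes the set of $C$-labeled samples of size at most $k$, and $L_C(\infty)$ the set of all finite $C$-labeled samples. A sample compression scheme for $C$ with kernel size $k$ and side information $I$ ($I$ a finite set) consists of a compression map $\kappa:L_C(\infty)\to L_C(k)\times I$ sending $(Y,y)$ to $((Z,z),i)$ with $Z\subseteq Y$ and $z=y|_Z$, and a reconstruction map $\rho:L_C(k)\times I\to\{0,1\}^X$ such that $\rho(\kappa(Y,y))|_Y=y$ for all $(Y,y)\in L_C(\infty)$. The size of the scheme is $k+\log_2|I|$. *)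

theory Defs
  imports Complex_Main "HOL-Library.Multiset"
begin

text \<open>A concept class over a domain D is a set H of functions 'a => bool;
  only the values on D matter.\<close>

definition shatters :: "'a set \<Rightarrow> ('a \<Rightarrow> bool) set \<Rightarrow> 'a set \<Rightarrow> bool" where
  "shatters D H Y \<longleftrightarrow> Y \<subseteq> D \<and>
     (\<forall>Z\<subseteq>Y. \<exists>c\<in>H. (\<forall>x\<in>Z. c x) \<and> (\<forall>x\<in>Y - Z. \<not> c x))"

definition has_vc_dim :: "'a set \<Rightarrow> ('a \<Rightarrow> bool) set \<Rightarrow> nat \<Rightarrow> bool" where
  "has_vc_dim D H d \<longleftrightarrow>
     (\<exists>Y. shatters D H Y \<and> finite Y \<and> card Y = d) \<and>
     (\<forall>Y. shatters D H Y \<longrightarrow> finite Y \<and> card Y \<le> d)"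

definition dual_class :: "'a set \<Rightarrow> (('a \<Rightarrow> bool) \<Rightarrow> bool) set" where
  "dual_class X = (\<lambda>x c. c x) ` X"

definition labeled_sample :: "'a set \<Rightarrow> ('a \<Rightarrow> bool) set \<Rightarrow> ('a \<times> bool) multiset \<Rightarrow> bool" where
  "labeled_sample X C S \<longleftrightarrow> (\<forall>p\<in>#S. fst p \<in> X) \<and> (\<exists>c\<in>C. \<forall>p\<in>#S. c (fst p) = snd p)"

definition compression_scheme ::
  "'a set \<Rightarrow> ('a \<Rightarrow> bool) set \<Rightarrow> nat \<Rightarrow> 'i set
   \<Rightarrow> (('a \<times> bool) multiset \<Rightarrow> ('a \<times> bool) multiset \<times> 'i)
   \<Rightarrow> (('a \<times> bool) multiset \<Rightarrow> 'i \<Rightarrow> ('a \<Rightarrow> bool)) \<Rightarrow> bool" where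
  "compression_scheme X C k I \<kappa> \<rho> \<longleftrightarrow> finite I \<and>
     (\<forall>S. labeled_sample X C S \<longrightarrow>
        fst (\<kappa> S) \<subseteq># S \<and> size (fst (\<kappa> S)) \<le> k \<and> snd (\<kappa> S) \<in> I \<and>
        (\<forall>p\<in>#S. \<rho> (fst (\<kappa> S)) (snd (\<kappa> S)) (fst p) = snd p))"

end

theory Submission
  imports Defs "HOL-Library.FuncSet"
begin

text \<open>By the epsilon-net theorem, the hypothesis of C
  agreeing with a suitable sample of O(d) points has small weighted error on any finite sample,
  so it is a weak learner; boosting it by multiplicative weights yields hypotheses whose majority
  is right on every sample point with margin 9/10. Because the dual class has VC dimension d*,
  an epsilon-approximation of the dual class picks O(d*) of them whose majority is still right.
  The kernel is the union of these O(d*) subsamples, O(d d*) labeled points, and the side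
  information records how the kernel splits into the subsamples, O(d d* log(d d*)) bits.
  Epsilon-nets and epsilon-approximations both come from one double sampling lemma, whose growth
  bound is Pajor's lemma.\<close>

section \<open>Pajor's lemma and the Sauer-Shelah bound\<close>

lemma card_filter_add_card_filter_not:
  assumes "finite A"
  shows "card {x\<in>A. P x} + card {x\<in>A. \<not> P x} = card A"
proof -
  have "A = {x\<in>A. P x} \<union> {x\<in>A. \<not> P x}" by auto
  then show ?thesis using assms by (metis (no_types, lifting) card_Un_disjoint disjoint_iff
      finite_Un mem_Collect_eq)
qed

definition family_shatters :: "'a set set \<Rightarrow> 'a set \<Rightarrow> bool" where
  "family_shatters H S \<longleftrightarrow> (\<forall>Z\<subseteq>S. \<exists>B\<in>H. B \<inter> S = Z)"

lemma family_shatters_remove_point: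
  assumes "w \<notin> S"
  shows "family_shatters ((\<lambda>B. B - {w}) ` H) S \<longleftrightarrow> family_shatters H S"
proof -
  have "(B - {w}) \<inter> S = B \<inter> S" for B using assms by blast
  then show ?thesis by (simp add: family_shatters_def)
qed

lemma family_shatters_insert_point:
  assumes "w \<notin> S" and sh: "family_shatters {B\<in>H. w \<notin> B \<and> insert w B \<in> H} S"
  shows "family_shatters H (insert w S)"
  unfolding family_shatters_def
proof (intro allI impI)
  fix Z assume Z: "Z \<subseteq> insert w S"
  then obtain B where B: "B \<in> H" "w \<notin> B" "insert w B \<in> H" "B \<inter> S = Z - {w}"
    using sh unfolding family_shatters_def by (metis (no_types, lifting) Diff_subset_conv insert_is_Un mem_Collect_eq)
  show "\<exists>B'\<in>H. B' \<inter> insert w S = Z"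
  proof (cases "w \<in> Z")
    case True
    then show ?thesis using B by (intro bexI[of _ "insert w B"]) auto
  next
    case False
    then show ?thesis using B Z by (intro bexI[of _ B]) auto
  qed
qed

text \<open>Removing a point w identifies the members of H that differ only at w; the pairs so
  identified are counted by the second family.\<close>
lemma card_remove_point:
  assumes "finite H"
  shows "card H = card ((\<lambda>B. B - {w}) ` H) + card {B\<in>H. w \<notin> B \<and> insert w B \<in> H}"
proof -
  define H0 where "H0 = {B\<in>H. w \<notin> B}"
  define H1 where "H1 = (\<lambda>B. B - {w}) ` {B\<in>H. w \<in> B}"
  have "inj_on (\<lambda>B. B - {w}) {B\<in>H. w \<in> B}"
    by (rule inj_onI) (metis (no_types, lifting) insert_Diff mem_Collect_eq)
  then have "card H1 = card {B\<in>H. w \<in> B}" by (simp add: H1_def card_image)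
  moreover have "card H = card H0 + card {B\<in>H. w \<in> B}"
    using card_filter_add_card_filter_not[OF assms, of "\<lambda>B. w \<notin> B"] by (simp add: H0_def)
  moreover have "(\<lambda>B. B - {w}) ` H = H0 \<union> H1"
  proof (intro equalityI subsetI)
    fix C assume "C \<in> (\<lambda>B. B - {w}) ` H"
    then obtain B where "B \<in> H" "C = B - {w}" by blast
    then show "C \<in> H0 \<union> H1" by (cases "w \<in> B") (auto simp: H0_def H1_def)
  qed (auto simp: H0_def H1_def intro: rev_image_eqI)
  moreover have "H0 \<inter> H1 = {B\<in>H. w \<notin> B \<and> insert w B \<in> H}"
  proof (intro equalityI subsetI)
    fix C assume "C \<in> H0 \<inter> H1"
    then show "C \<in> {B\<in>H. w \<notin> B \<and> insert w B \<in> H}" by (auto simp: H0_def H1_def insert_absorb)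
  qed (auto simp: H0_def H1_def intro!: rev_image_eqI[of "insert w _"])
  moreover have "finite H0" "finite H1" using assms by (auto simp: H0_def H1_def)
  ultimately show ?thesis using card_Un_Int[of H0 H1] by simp
qed

lemma card_shattered_subsets_insert:
  assumes "finite P" "w \<notin> P"
  shows "card {S. S \<subseteq> P \<and> family_shatters ((\<lambda>B. B - {w}) ` H) S}
      + card {S. S \<subseteq> P \<and> family_shatters {B\<in>H. w \<notin> B \<and> insert w B \<in> H} S}
    \<le> card {S. S \<subseteq> insert w P \<and> family_shatters H S}"
proof -
  define Sh where "Sh G = {S. S \<subseteq> P \<and> family_shatters G S}" for G
  define Hr where "Hr = (\<lambda>B. B - {w}) ` H"
  define Hp where "Hp = {B\<in>H. w \<notin> B \<and> insert w B \<in> H}"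
  have w_notin: "w \<notin> S" if "S \<in> Sh G" for S G using that assms(2) by (auto simp: Sh_def)
  have "inj_on (insert w) (Sh Hp)"
    by (rule inj_onI) (metis Diff_insert_absorb w_notin)
  moreover have "finite (Sh G)" for G using assms(1) by (simp add: Sh_def)
  moreover have "Sh Hr \<inter> insert w ` Sh Hp = {}" using w_notin by blast
  ultimately have "card (Sh Hr) + card (Sh Hp) = card (Sh Hr \<union> insert w ` Sh Hp)"
    by (simp add: card_Un_disjoint card_image)
  also have "\<dots> \<le> card {S. S \<subseteq> insert w P \<and> family_shatters H S}"
  proof (rule card_mono, simp add: assms(1), intro subsetI, elim UnE imageE)
    fix S assume S: "S \<in> Sh Hr"
    then show "S \<in> {S. S \<subseteq> insert w P \<and> family_shatters H S}"
      using family_shatters_remove_point[OF w_notin[OF S]] by (auto simp: Sh_def Hr_def)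
  next
    fix S' S assume S: "S \<in> Sh Hp" and "S' = insert w S"
    then show "S' \<in> {S. S \<subseteq> insert w P \<and> family_shatters H S}"
      using family_shatters_insert_point[OF w_notin[OF S]] by (auto simp: Sh_def Hp_def)
  qed
  finally show ?thesis by (simp add: Sh_def Hr_def Hp_def)
qed

lemma card_le_card_shattered_subsets:
  assumes "finite P" and "\<forall>B\<in>H. B \<subseteq> P"
  shows "card H \<le> card {S. S \<subseteq> P \<and> family_shatters H S}"
  using assms
proof (induction P arbitrary: H rule: finite_induct)
  case empty
  show ?case
  proof (cases "H = {}")
    case False
    have "H \<subseteq> {{}}" using empty by auto
    with False have "H = {{}}" by blast
    have "family_shatters {{}} {}" by (simp add: family_shatters_def)
    then have shattered: "{S. S \<subseteq> {} \<and> family_shatters {{}} S} = {{}}" by blast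
    show ?thesis unfolding \<open>H = {{}}\<close> shattered by simp
  qed simp
next
  case (insert w P H)
  have "finite H"
    by (rule finite_subset[of _ "Pow (insert w P)"]) (use insert in auto)
  then have "card H = card ((\<lambda>B. B - {w}) ` H) + card {B\<in>H. w \<notin> B \<and> insert w B \<in> H}"
    by (rule card_remove_point)
  also have "\<dots> \<le> card {S. S \<subseteq> P \<and> family_shatters ((\<lambda>B. B - {w}) ` H) S}
      + card {S. S \<subseteq> P \<and> family_shatters {B\<in>H. w \<notin> B \<and> insert w B \<in> H} S}"
    using insert.prems by (intro add_mono insert.IH) auto
  also have "\<dots> \<le> card {S. S \<subseteq> insert w P \<and> family_shatters H S}"
    by (rule card_shattered_subsets_insert[OF insert.hyps])
  finally show ?case .
qed

lemma card_family_le_sum_binomial: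
  assumes "finite P" and "\<forall>B\<in>H. B \<subseteq> P"
    and "\<And>S. S \<subseteq> P \<Longrightarrow> family_shatters H S \<Longrightarrow> card S \<le> d"
  shows "card H \<le> (\<Sum>i\<le>d. card P choose i)"
proof -
  have "card H \<le> card {S. S \<subseteq> P \<and> family_shatters H S}"
    by (rule card_le_card_shattered_subsets[OF assms(1,2)])
  also have "\<dots> \<le> card (\<Union>i\<le>d. {S. S \<subseteq> P \<and> card S = i})"
    using assms by (intro card_mono) auto
  also have "\<dots> \<le> (\<Sum>i\<le>d. card {S. S \<subseteq> P \<and> card S = i})"
    by (rule card_UN_le) simp
  also have "\<dots> = (\<Sum>i\<le>d. card P choose i)"
    using n_subsets[OF assms(1)] by simp
  finally show ?thesis .
qed

lemma sum_binomial_le_power: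
  assumes "1 \<le> d" "d \<le> N" "n \<le> N"
  shows "real (\<Sum>i\<le>d. n choose i) \<le> (3 * real N / real d) ^ d"
proof -
  define x where "x = real d / real N"
  have x0: "0 < x" and x1: "x \<le> 1" using assms by (auto simp: x_def)
  have "x ^ d * real (\<Sum>i\<le>d. n choose i) \<le> x ^ d * real (\<Sum>i\<le>d. N choose i)"
    using x0 by (intro mult_left_mono of_nat_mono sum_mono binomial_right_mono assms) auto
  also have "\<dots> = (\<Sum>i\<le>d. real (N choose i) * x ^ d)"
    by (simp add: sum_distrib_left mult.commute)
  also have "\<dots> \<le> (\<Sum>i\<le>d. real (N choose i) * x ^ i)"
    by (intro sum_mono mult_left_mono power_decreasing) (use x0 x1 in auto)
  also have "\<dots> \<le> (\<Sum>i\<le>N. real (N choose i) * x ^ i)"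
    by (intro sum_mono2) (use assms x0 in auto)
  also have "\<dots> = (x + 1) ^ N"
    by (simp add: binomial_ring mult.commute)
  also have "\<dots> \<le> exp x ^ N"
    by (intro power_mono) (use x0 in \<open>auto simp: add.commute\<close>)
  also have "\<dots> = exp 1 ^ d"
    using assms by (simp add: x_def flip: exp_of_nat_mult)
  also have "\<dots> \<le> 3 ^ d" by (intro power_mono) (use exp_le in auto)
  finally have "real (\<Sum>i\<le>d. n choose i) \<le> 3 ^ d / x ^ d"
    using x0 by (simp add: field_simps)
  also have "\<dots> = (3 * real N / real d) ^ d"
    by (simp add: x_def power_divide)
  finally show ?thesis .
qed

lemma card_family_le_power:
  assumes "finite P" "card P \<le> n" "1 \<le> d" "d \<le> n" and "\<forall>B\<in>H. B \<subseteq> P"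
    and "\<And>S. S \<subseteq> P \<Longrightarrow> family_shatters H S \<Longrightarrow> card S \<le> d"
  shows "real (card H) \<le> (3 * real n / real d) ^ d"
  using card_family_le_sum_binomial[OF assms(1,5,6)] sum_binomial_le_power[OF assms(3,4,2)]
  by (meson of_nat_le_iff order_trans)

section \<open>Traces of a class and of its dual class\<close>

definition vc_dim_le :: "'a set \<Rightarrow> ('a \<Rightarrow> bool) set \<Rightarrow> nat \<Rightarrow> bool" where
  "vc_dim_le D H d \<longleftrightarrow> (\<forall>Y. shatters D H Y \<longrightarrow> finite Y \<and> card Y \<le> d)"

lemma has_vc_dim_imp_vc_dim_le: "has_vc_dim D H d \<Longrightarrow> vc_dim_le D H d"
  by (simp add: has_vc_dim_def vc_dim_le_def)

lemma family_shatters_traces_imp_shatters: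
  assumes "family_shatters ((\<lambda>h. {x\<in>Q. h x}) ` C) S" "S \<subseteq> Q" "Q \<subseteq> X"
  shows "shatters X C S"
  unfolding shatters_def
proof (intro conjI allI impI)
  fix Z assume "Z \<subseteq> S"
  then obtain h where "h \<in> C" "{x\<in>Q. h x} \<inter> S = Z"
    using assms(1) by (auto simp: family_shatters_def)
  then show "\<exists>c\<in>C. (\<forall>x\<in>Z. c x) \<and> (\<forall>x\<in>S - Z. \<not> c x)"
    using assms(2) by (intro bexI[of _ h]) auto
qed (use assms in auto)

lemma card_traces_le:
  assumes "vc_dim_le X C d" "finite Q" "Q \<subseteq> X" "card Q \<le> n" "1 \<le> d" "d \<le> n"
  shows "real (card ((\<lambda>h. {x\<in>Q. h x}) ` C)) \<le> (3 * real n / real d) ^ d"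
proof (rule card_family_le_power[OF assms(2,4,5,6)])
  fix S assume "S \<subseteq> Q" "family_shatters ((\<lambda>h. {x\<in>Q. h x}) ` C) S"
  then have "shatters X C S" by (intro family_shatters_traces_imp_shatters[OF _ _ assms(3)])
  then show "card S \<le> d" using assms(1) by (simp add: vc_dim_le_def)
qed auto

lemma family_shatters_dual_traces_imp_inj:
  assumes "family_shatters ((\<lambda>x. {t\<in>P. g t x}) ` Y) S" "S \<subseteq> P"
  shows "inj_on g S"
proof (rule inj_onI, rule ccontr)
  fix t1 t2 assume t: "t1 \<in> S" "t2 \<in> S" "g t1 = g t2" "t1 \<noteq> t2"
  then have "{t1} \<subseteq> S" by simp
  then obtain B where "B \<in> (\<lambda>x. {t\<in>P. g t x}) ` Y" "B \<inter> S = {t1}"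
    using assms(1) unfolding family_shatters_def by meson
  then obtain x where eq: "{t\<in>P. g t x} \<inter> S = {t1}" by auto
  have "t1 \<in> {t\<in>P. g t x} \<inter> S" "t2 \<notin> {t\<in>P. g t x} \<inter> S"
    unfolding eq using t(4) by auto
  then show False using t assms(2) by auto
qed

lemma family_shatters_dual_traces_imp_shatters:
  assumes "family_shatters ((\<lambda>x. {t\<in>P. g t x}) ` Y) S" "S \<subseteq> P" "g ` P \<subseteq> C" "Y \<subseteq> X"
  shows "shatters C (dual_class X) (g ` S)"
  unfolding shatters_def
proof (intro conjI allI impI)
  fix Z' assume Z': "Z' \<subseteq> g ` S"
  have "{t\<in>S. g t \<in> Z'} \<subseteq> S" by blast
  then obtain B where "B \<in> (\<lambda>x. {t\<in>P. g t x}) ` Y" "B \<inter> S = {t\<in>S. g t \<in> Z'}"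
    using assms(1) unfolding family_shatters_def by meson
  then obtain x where x: "x \<in> Y" "{t\<in>P. g t x} \<inter> S = {t\<in>S. g t \<in> Z'}" by auto
  have iff: "g t x \<longleftrightarrow> g t \<in> Z'" if "t \<in> S" for t
    using that x(2) assms(2) by (auto simp: set_eq_iff)
  have "(\<lambda>c. c x) \<in> dual_class X" using x(1) assms(4) by (auto simp: dual_class_def)
  moreover have "\<forall>c\<in>Z'. c x" "\<forall>c\<in>g ` S - Z'. \<not> c x"
    using iff Z' by auto
  ultimately show "\<exists>f\<in>dual_class X. (\<forall>c\<in>Z'. f c) \<and> (\<forall>c\<in>g ` S - Z'. \<not> f c)"
    by blast
qed (use assms in auto)

lemma card_dual_traces_le:
  assumes "vc_dim_le C (dual_class X) d" "finite P" "card P \<le> n" "1 \<le> d" "d \<le> n"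
    "g ` P \<subseteq> C" "Y \<subseteq> X"
  shows "real (card ((\<lambda>x. {t\<in>P. g t x}) ` Y)) \<le> (3 * real n / real d) ^ d"
proof (rule card_family_le_power[OF assms(2-5)])
  fix S assume S: "S \<subseteq> P" "family_shatters ((\<lambda>x. {t\<in>P. g t x}) ` Y) S"
  have "shatters C (dual_class X) (g ` S)"
    by (rule family_shatters_dual_traces_imp_shatters[OF S(2,1) assms(6,7)])
  then have "card (g ` S) \<le> d" using assms(1) by (simp add: vc_dim_le_def)
  then show "card S \<le> d"
    using family_shatters_dual_traces_imp_inj[OF S(2,1)] by (simp add: card_image)
qed auto

section \<open>Double sampling\<close>

text \<open>Probabilities are replaced by counting: a random sequence of m points of \<Omega> is an element
  of the extensional function space from {0..<m} to \<Omega>, and m random signs form an element of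
  the one from {0..<m} to the booleans.\<close>

lemma real_card_filter_eq_sum:
  assumes "finite S"
  shows "real (card {x\<in>S. P x}) = (\<Sum>x\<in>S. if P x then 1 else 0)"
  using assms by (simp add: sum.inter_filter[symmetric])

definition hits :: "nat \<Rightarrow> (nat \<Rightarrow> 'a) \<Rightarrow> 'a set \<Rightarrow> nat" where
  "hits m u A = card {j\<in>{0..<m}. u j \<in> A}"

lemma int_hits_eq_sum: "int (hits m u A) = (\<Sum>j\<in>{0..<m}. of_bool (u j \<in> A))"
  by (simp add: hits_def of_bool_def sum.inter_filter[symmetric])

lemma sum_power_hits:
  assumes "finite \<Omega>"
  shows "(\<Sum>u\<in>{0..<m} \<rightarrow>\<^sub>E \<Omega>. (c::'b::comm_semiring_1) ^ hits m u A)
    = (\<Sum>\<omega>\<in>\<Omega>. if \<omega> \<in> A then c else 1) ^ m"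
proof -
  have "(\<Sum>\<omega>\<in>\<Omega>. if \<omega> \<in> A then c else 1) ^ m = (\<Prod>j\<in>{0..<m}. \<Sum>\<omega>\<in>\<Omega>. if \<omega> \<in> A then c else 1)"
    by simp
  also have "\<dots> = (\<Sum>u\<in>{0..<m} \<rightarrow>\<^sub>E \<Omega>. \<Prod>j\<in>{0..<m}. if u j \<in> A then c else 1)"
    by (rule prod_sum_PiE) (use assms in auto)
  also have "\<dots> = (\<Sum>u\<in>{0..<m} \<rightarrow>\<^sub>E \<Omega>. c ^ hits m u A)"
    by (simp add: hits_def prod.inter_filter[symmetric])
  finally show ?thesis by simp
qed

text \<open>A Chernoff-type bound: the indicator of at most k hits is dominated by q ^ k * (1/q) ^ hits,
  whose sum over all sequences factorizes.\<close>
lemma card_few_hits_le: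
  assumes "finite \<Omega>" "A \<subseteq> \<Omega>" "1 \<le> q" "0 \<le> \<beta>" "\<beta> * real (card \<Omega>) \<le> real (card A)"
  shows "real (card {v\<in>{0..<m} \<rightarrow>\<^sub>E \<Omega>. hits m v A \<le> k})
    \<le> q ^ k * (1 - \<beta> * (1 - 1/q)) ^ m * real (card \<Omega>) ^ m"
proof -
  define N where "N = real (card \<Omega>)"
  have "real (card {v\<in>{0..<m} \<rightarrow>\<^sub>E \<Omega>. hits m v A \<le> k})
      = (\<Sum>v\<in>{0..<m} \<rightarrow>\<^sub>E \<Omega>. if hits m v A \<le> k then 1 else 0)"
    using assms(1) by (simp add: real_card_filter_eq_sum finite_PiE)
  also have "\<dots> \<le> (\<Sum>v\<in>{0..<m} \<rightarrow>\<^sub>E \<Omega>. q ^ k * (1/q) ^ hits m v A)"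
  proof (rule sum_mono)
    fix v
    have "q ^ hits m v A \<le> q ^ k" if "hits m v A \<le> k" using that assms(3) by (rule power_increasing)
    then show "(if hits m v A \<le> k then 1 else 0) \<le> q ^ k * (1/q) ^ hits m v A"
      using assms(3) by (auto simp: power_one_over field_simps)
  qed
  also have "\<dots> = q ^ k * (\<Sum>\<omega>\<in>\<Omega>. if \<omega> \<in> A then 1/q else 1) ^ m"
    by (simp add: sum_distrib_left[symmetric] sum_power_hits[OF assms(1)])
  also have "(\<Sum>\<omega>\<in>\<Omega>. if \<omega> \<in> A then 1/q else 1) = N - real (card A) * (1 - 1/q)"
    using assms(1,2) finite_subset[OF assms(2,1)]
    by (simp add: sum.If_cases Int_absorb1 N_def Diff_eq[symmetric] card_Diff_subset card_mono
        of_nat_diff algebra_simps)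
  also have "(N - real (card A) * (1 - 1/q)) ^ m \<le> (N * (1 - \<beta> * (1 - 1/q))) ^ m"
  proof (rule power_mono)
    have "\<beta> * N * (1 - 1/q) \<le> real (card A) * (1 - 1/q)"
      using assms(3,5) by (intro mult_right_mono) (auto simp: N_def)
    then show "N - real (card A) * (1 - 1/q) \<le> N * (1 - \<beta> * (1 - 1/q))"
      by (simp add: algebra_simps)
    have "real (card A) * (1 - 1/q) \<le> real (card A)" using assms(3) by (simp add: mult_left_le)
    also have "\<dots> \<le> N" using card_mono[OF assms(1,2)] by (simp add: N_def)
    finally show "0 \<le> N - real (card A) * (1 - 1/q)" by simp
  qed
  finally show ?thesis
    using assms(3) by (simp add: N_def power_mult_distrib mult_ac)
qed

text \<open>The exponential-moment (Chernoff) bound for a sum of m independent random signs,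
  stated by counting sign vectors.\<close>
lemma card_signed_sum_ge_le:
  assumes "1 \<le> q" and "\<forall>j. \<bar>e j\<bar> \<le> (1::int)"
  shows "real (card {\<sigma>\<in>{0..<m} \<rightarrow>\<^sub>E (UNIV::bool set).
                 int t \<le> (\<Sum>j\<in>{0..<m}. if \<sigma> j then - e j else e j)})
    \<le> (q + 1/q) ^ m / q ^ t"
proof -
  define D where "D \<sigma> = (\<Sum>j\<in>{0..<m}. if \<sigma> j then - e j else e j)" for \<sigma>
  define f where "f j b = q powr real_of_int (if b then - e j else e j)" for j b
  have q0: "q > 0" using assms(1) by simp
  have "real (card {\<sigma>\<in>{0..<m} \<rightarrow>\<^sub>E UNIV. int t \<le> D \<sigma>})
      = (\<Sum>\<sigma>\<in>{0..<m} \<rightarrow>\<^sub>E UNIV. if int t \<le> D \<sigma> then 1 else 0)"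
    by (simp add: real_card_filter_eq_sum finite_PiE)
  also have "\<dots> \<le> (\<Sum>\<sigma>\<in>{0..<m} \<rightarrow>\<^sub>E UNIV. q powr (real_of_int (D \<sigma>) - real t))"
    using assms(1) by (intro sum_mono) (auto intro!: ge_one_powr_ge_zero)
  also have "\<dots> = (\<Sum>\<sigma>\<in>{0..<m} \<rightarrow>\<^sub>E UNIV. \<Prod>j\<in>{0..<m}. f j (\<sigma> j)) / q ^ t"
    using q0 by (simp add: sum_divide_distrib powr_diff D_def f_def powr_sum powr_realpow)
  also have "(\<Sum>\<sigma>\<in>{0..<m} \<rightarrow>\<^sub>E UNIV. \<Prod>j\<in>{0..<m}. f j (\<sigma> j)) = (\<Prod>j\<in>{0..<m}. f j False + f j True)"
    by (subst prod_sum_PiE[symmetric]) (auto simp: UNIV_bool)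
  also have "\<dots> \<le> (\<Prod>j\<in>{0..<m}. q + 1/q)"
  proof (rule prod_mono)
    fix j
    have "2 \<le> q + 1/q"
      using q0 sum_squares_ge_zero[of "q - 1" 0] by (simp add: field_simps power2_eq_square)
    moreover have "e j = -1 \<or> e j = 0 \<or> e j = 1" using assms(2)[rule_format, of j] by linarith
    ultimately show "0 \<le> f j False + f j True \<and> f j False + f j True \<le> q + 1/q"
      using q0 by (auto simp: f_def powr_minus_divide)
  qed
  finally show ?thesis using q0 by (simp add: D_def divide_right_mono)
qed

definition swap_seqs :: "(nat \<Rightarrow> bool) \<Rightarrow> (nat \<Rightarrow> 'a) \<times> (nat \<Rightarrow> 'a) \<Rightarrow> (nat \<Rightarrow> 'a) \<times> (nat \<Rightarrow> 'a)" where
  "swap_seqs \<sigma> \<omega> = (\<lambda>j. if \<sigma> j then snd \<omega> j else fst \<omega> j, \<lambda>j. if \<sigma> j then fst \<omega> j else snd \<omega> j)"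

lemma swap_seqs_swap_seqs [simp]: "swap_seqs \<sigma> (swap_seqs \<sigma> \<omega>) = \<omega>"
  by (cases \<omega>) (simp add: swap_seqs_def fun_eq_iff)

lemma bij_betw_swap_seqs:
  "bij_betw (swap_seqs \<sigma>) (({0..<m} \<rightarrow>\<^sub>E \<Omega>) \<times> ({0..<m} \<rightarrow>\<^sub>E \<Omega>)) (({0..<m} \<rightarrow>\<^sub>E \<Omega>) \<times> ({0..<m} \<rightarrow>\<^sub>E \<Omega>))"
proof -
  have "swap_seqs \<sigma> ` (({0..<m} \<rightarrow>\<^sub>E \<Omega>) \<times> ({0..<m} \<rightarrow>\<^sub>E \<Omega>)) \<subseteq> ({0..<m} \<rightarrow>\<^sub>E \<Omega>) \<times> ({0..<m} \<rightarrow>\<^sub>E \<Omega>)"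
    by (auto simp: swap_seqs_def PiE_iff extensional_def)
  then show ?thesis by (intro bij_betw_byWitness[where f' = "swap_seqs \<sigma>"]) simp_all
qed

definition hit_gap :: "'a set set \<Rightarrow> nat \<Rightarrow> nat \<Rightarrow> nat \<Rightarrow> (nat \<Rightarrow> 'a) \<times> (nat \<Rightarrow> 'a) \<Rightarrow> bool" where
  "hit_gap F m a k \<omega> \<longleftrightarrow> (\<exists>A\<in>F. hits m (fst \<omega>) A \<le> a \<and> k \<le> hits m (snd \<omega>) A)"

lemma int_hits_swap_seqs_diff:
  assumes "\<forall>j<m. u j \<in> Z \<and> v j \<in> Z"
  shows "int (hits m (snd (swap_seqs \<sigma> (u, v))) A) - int (hits m (fst (swap_seqs \<sigma> (u, v))) A)
    = (\<Sum>j\<in>{0..<m}. if \<sigma> j then - (of_bool (v j \<in> A \<inter> Z) - of_bool (u j \<in> A \<inter> Z))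
                    else of_bool (v j \<in> A \<inter> Z) - of_bool (u j \<in> A \<inter> Z))"
proof -
  have "int (hits m (snd (swap_seqs \<sigma> (u, v))) A) - int (hits m (fst (swap_seqs \<sigma> (u, v))) A)
      = (\<Sum>j\<in>{0..<m}. of_bool (snd (swap_seqs \<sigma> (u, v)) j \<in> A)
           - of_bool (fst (swap_seqs \<sigma> (u, v)) j \<in> A))"
    by (simp add: int_hits_eq_sum sum_subtractf)
  also have "\<dots> = (\<Sum>j\<in>{0..<m}. if \<sigma> j then - (of_bool (v j \<in> A \<inter> Z) - of_bool (u j \<in> A \<inter> Z))
                    else of_bool (v j \<in> A \<inter> Z) - of_bool (u j \<in> A \<inter> Z))"
    using assms by (intro sum.cong) (auto simp: swap_seqs_def)
  finally show ?thesis .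
qed

text \<open>Only the traces of F on the at most 2m points of u and v matter, and for each trace
  the gap in hits is a sum of m random signs.\<close>
lemma card_swaps_hit_gap_le:
  assumes uv: "u \<in> {0..<m} \<rightarrow>\<^sub>E \<Omega>" "v \<in> {0..<m} \<rightarrow>\<^sub>E \<Omega>"
    and growth: "\<forall>P\<subseteq>\<Omega>. card P \<le> 2 * m \<longrightarrow> real (card ((\<lambda>A. A \<inter> P) ` F)) \<le> G"
    and "a < k" "1 \<le> q"
  shows "real (card {\<sigma>\<in>{0..<m} \<rightarrow>\<^sub>E (UNIV::bool set). hit_gap F m a k (swap_seqs \<sigma> (u, v))})
    \<le> G * ((q + 1/q) ^ m / q ^ (k - a))"
proof -
  let ?S = "{0..<m} \<rightarrow>\<^sub>E (UNIV::bool set)"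
  define Z where "Z = u ` {0..<m} \<union> v ` {0..<m}"
  define e where "e B j = of_bool (v j \<in> B) - (of_bool (u j \<in> B) :: int)" for B j
  define Big where "Big B = {\<sigma>\<in>?S. int (k - a) \<le> (\<Sum>j\<in>{0..<m}. if \<sigma> j then - e B j else e B j)}" for B
  have card_Z: "card Z \<le> 2 * m"
    using card_Un_le[of "u ` {0..<m}" "v ` {0..<m}"] card_image_le[of "{0..<m}" u]
      card_image_le[of "{0..<m}" v] by (simp add: Z_def)
  define TR where "TR = (\<lambda>A. A \<inter> Z) ` F"
  have "{\<sigma>\<in>?S. hit_gap F m a k (swap_seqs \<sigma> (u, v))} \<subseteq> (\<Union>B\<in>TR. Big B)"
  proof safe
    fix \<sigma> assume \<sigma>: "\<sigma> \<in> ?S" "hit_gap F m a k (swap_seqs \<sigma> (u, v))"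
    then obtain A where A: "A \<in> F" "hits m (fst (swap_seqs \<sigma> (u, v))) A \<le> a"
      "k \<le> hits m (snd (swap_seqs \<sigma> (u, v))) A" by (auto simp: hit_gap_def)
    have "\<forall>j<m. u j \<in> Z \<and> v j \<in> Z" by (simp add: Z_def)
    then have "int (hits m (snd (swap_seqs \<sigma> (u, v))) A) - int (hits m (fst (swap_seqs \<sigma> (u, v))) A)
        = (\<Sum>j\<in>{0..<m}. if \<sigma> j then - e (A \<inter> Z) j else e (A \<inter> Z) j)"
      unfolding e_def by (rule int_hits_swap_seqs_diff)
    then have "\<sigma> \<in> Big (A \<inter> Z)" using A \<sigma>(1) \<open>a < k\<close> by (simp add: Big_def)
    then show "\<sigma> \<in> (\<Union>B\<in>TR. Big B)" using A(1) by (auto simp: TR_def)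
  qed
  then have "card {\<sigma>\<in>?S. hit_gap F m a k (swap_seqs \<sigma> (u, v))} \<le> card (\<Union>B\<in>TR. Big B)"
    using finite_subset[of "\<Union>B\<in>TR. Big B" ?S] by (intro card_mono) (auto simp: Big_def finite_PiE)
  also have "\<dots> \<le> (\<Sum>B\<in>TR. card (Big B))"
    by (rule card_UN_le, rule finite_subset[of _ "Pow Z"]) (auto simp: TR_def Z_def)
  finally have "real (card {\<sigma>\<in>?S. hit_gap F m a k (swap_seqs \<sigma> (u, v))}) \<le> (\<Sum>B\<in>TR. real (card (Big B)))"
    by (simp flip: of_nat_sum)
  also have "\<dots> \<le> (\<Sum>B\<in>TR. (q + 1/q) ^ m / q ^ (k - a))"
    using card_signed_sum_ge_le[OF \<open>1 \<le> q\<close>] by (intro sum_mono) (simp add: Big_def e_def)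
  also have "\<dots> = real (card TR) * ((q + 1/q) ^ m / q ^ (k - a))" by simp
  also have "\<dots> \<le> G * ((q + 1/q) ^ m / q ^ (k - a))"
  proof (rule mult_right_mono)
    have "Z \<subseteq> \<Omega>" using uv by (auto simp: Z_def PiE_iff)
    then show "real (card TR) \<le> G" using growth card_Z by (simp add: TR_def)
  qed (use \<open>1 \<le> q\<close> in simp)
  finally show ?thesis .
qed

lemma card_many_hits_ge:
  assumes "finite \<Omega>" "A \<subseteq> \<Omega>" "0 \<le> \<beta>" "\<beta> * real (card \<Omega>) \<le> real (card A)" "0 < k"
    and "2 ^ (k - 1) * (1 - \<beta> / 2) ^ m \<le> (1/2::real)"
  shows "real (card \<Omega>) ^ m / 2 \<le> real (card {v\<in>{0..<m} \<rightarrow>\<^sub>E \<Omega>. k \<le> hits m v A})"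
proof -
  let ?Sp = "{0..<m} \<rightarrow>\<^sub>E \<Omega>"
  have "{v\<in>?Sp. \<not> k \<le> hits m v A} = {v\<in>?Sp. hits m v A \<le> k - 1}"
    using assms(5) by auto
  then have "card {v\<in>?Sp. k \<le> hits m v A} + card {v\<in>?Sp. hits m v A \<le> k - 1} = card \<Omega> ^ m"
    using card_filter_add_card_filter_not[of ?Sp "\<lambda>v. k \<le> hits m v A"] assms(1)
    by (simp add: finite_PiE card_PiE)
  then have "real (card {v\<in>?Sp. k \<le> hits m v A}) + real (card {v\<in>?Sp. hits m v A \<le> k - 1})
      = real (card \<Omega>) ^ m"
    unfolding of_nat_add[symmetric] of_nat_power[symmetric] by (rule arg_cong[where f=real])
  moreover have "real (card {v\<in>?Sp. hits m v A \<le> k - 1}) \<le> real (card \<Omega>) ^ m / 2"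
  proof -
    have "real (card {v\<in>?Sp. hits m v A \<le> k - 1})
        \<le> 2 ^ (k - 1) * (1 - \<beta> / 2) ^ m * real (card \<Omega>) ^ m"
      using card_few_hits_le[OF assms(1-2) _ assms(3-4), of 2 m "k - 1"] by simp
    also have "\<dots> \<le> real (card \<Omega>) ^ m / 2"
      using mult_right_mono[OF assms(6), of "real (card \<Omega>) ^ m"] by simp
    finally show ?thesis .
  qed
  ultimately show ?thesis by linarith
qed

lemma card_hit_gap_pairs_ge:
  assumes "finite \<Omega>" "\<forall>A\<in>F. A \<subseteq> \<Omega>" "0 \<le> \<beta>" "a < k"
    and "2 ^ (k - 1) * (1 - \<beta> / 2) ^ m \<le> (1/2::real)"
  shows "real (card {u\<in>{0..<m} \<rightarrow>\<^sub>E \<Omega>. \<exists>A\<in>F. \<beta> * real (card \<Omega>) \<le> real (card A) \<and> hits m u A \<le> a})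
      * (real (card \<Omega>) ^ m / 2)
    \<le> real (card {\<omega>\<in>({0..<m} \<rightarrow>\<^sub>E \<Omega>) \<times> ({0..<m} \<rightarrow>\<^sub>E \<Omega>). hit_gap F m a k \<omega>})"
proof -
  let ?Sp = "{0..<m} \<rightarrow>\<^sub>E \<Omega>"
  define Bad where "Bad = {u\<in>?Sp. \<exists>A\<in>F. \<beta> * real (card \<Omega>) \<le> real (card A) \<and> hits m u A \<le> a}"
  define A where "A u = (SOME A. A \<in> F \<and> \<beta> * real (card \<Omega>) \<le> real (card A) \<and> hits m u A \<le> a)" for u
  have A: "A u \<in> F \<and> \<beta> * real (card \<Omega>) \<le> real (card (A u)) \<and> hits m u (A u) \<le> a" if "u \<in> Bad" for u
    unfolding A_def by (rule someI_ex) (use that in \<open>auto simp: Bad_def\<close>)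
  define Good where "Good u = {v\<in>?Sp. k \<le> hits m v (A u)}" for u
  have fin: "finite ?Sp" using assms(1) by (simp add: finite_PiE)
  have "real (card Bad) * (real (card \<Omega>) ^ m / 2) = (\<Sum>u\<in>Bad. real (card \<Omega>) ^ m / 2)" by simp
  also have "\<dots> \<le> (\<Sum>u\<in>Bad. real (card (Good u)))"
  proof (rule sum_mono)
    fix u assume "u \<in> Bad"
    then show "real (card \<Omega>) ^ m / 2 \<le> real (card (Good u))"
      unfolding Good_def using A assms by (intro card_many_hits_ge) auto
  qed
  also have "\<dots> = real (card (Sigma Bad Good))"
    using fin by (subst card_SigmaI) (auto simp: Bad_def Good_def finite_subset)
  also have "\<dots> \<le> real (card {\<omega>\<in>?Sp \<times> ?Sp. hit_gap F m a k \<omega>})"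
  proof (intro of_nat_mono card_mono subsetI)
    fix \<omega> assume "\<omega> \<in> Sigma Bad Good"
    then obtain u v where uv: "\<omega> = (u, v)" "u \<in> Bad" "v \<in> Good u" by blast
    then have "u \<in> ?Sp" "v \<in> ?Sp" "k \<le> hits m v (A u)" by (auto simp: Bad_def Good_def)
    with A[OF uv(2)] show "\<omega> \<in> {\<omega>\<in>?Sp \<times> ?Sp. hit_gap F m a k \<omega>}"
      unfolding uv(1) hit_gap_def by auto
  qed (use fin in simp)
  finally show ?thesis by (simp add: Bad_def)
qed

text \<open>Symmetrization: swapping corresponding entries of the two sequences preserves the
  uniform distribution on pairs, so the pairs with a hit gap can be counted swap by swap.\<close>
lemma card_hit_gap_pairs_le:
  assumes "finite \<Omega>"
    and growth: "\<forall>P\<subseteq>\<Omega>. card P \<le> 2 * m \<longrightarrow> real (card ((\<lambda>A. A \<inter> P) ` F)) \<le> G"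
    and "a < k" "1 \<le> q"
  shows "2 ^ m * real (card {\<omega>\<in>({0..<m} \<rightarrow>\<^sub>E \<Omega>) \<times> ({0..<m} \<rightarrow>\<^sub>E \<Omega>). hit_gap F m a k \<omega>})
    \<le> real (card \<Omega>) ^ m * real (card \<Omega>) ^ m * (G * ((q + 1/q) ^ m / q ^ (k - a)))"
proof -
  let ?Sp2 = "({0..<m} \<rightarrow>\<^sub>E \<Omega>) \<times> ({0..<m} \<rightarrow>\<^sub>E \<Omega>)"
  let ?S = "{0..<m} \<rightarrow>\<^sub>E (UNIV::bool set)"
  define bnd where "bnd = G * ((q + 1/q) ^ m / q ^ (k - a))"
  have fin: "finite ?Sp2" using assms(1) by (simp add: finite_PiE)
  have "real (card {\<omega>\<in>?Sp2. hit_gap F m a k \<omega>}) = (\<Sum>\<omega>\<in>?Sp2. if hit_gap F m a k (swap_seqs \<sigma> \<omega>) then 1 else 0)"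
    for \<sigma>
    unfolding real_card_filter_eq_sum[OF fin]
    by (rule sum.reindex_bij_betw[OF bij_betw_swap_seqs, symmetric])
  then have "2 ^ m * real (card {\<omega>\<in>?Sp2. hit_gap F m a k \<omega>})
      = (\<Sum>\<sigma>\<in>?S. \<Sum>\<omega>\<in>?Sp2. if hit_gap F m a k (swap_seqs \<sigma> \<omega>) then 1 else 0)"
    by (simp add: card_PiE)
  also have "\<dots> = (\<Sum>\<omega>\<in>?Sp2. real (card {\<sigma>\<in>?S. hit_gap F m a k (swap_seqs \<sigma> \<omega>)}))"
    by (subst sum.swap) (simp add: real_card_filter_eq_sum finite_PiE)
  also have "\<dots> \<le> (\<Sum>\<omega>\<in>?Sp2. bnd)"
    using card_swaps_hit_gap_le[OF _ _ growth assms(3,4)] by (intro sum_mono) (auto simp: bnd_def)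
  finally show ?thesis by (simp add: card_cartesian_product card_PiE bnd_def)
qed

lemma exists_seq_hitting_large_sets:
  assumes "finite \<Omega>" "\<Omega> \<noteq> {}" "\<forall>A\<in>F. A \<subseteq> \<Omega>"
    and growth: "\<forall>P\<subseteq>\<Omega>. card P \<le> 2 * m \<longrightarrow> real (card ((\<lambda>A. A \<inter> P) ` F)) \<le> G"
    and "a < k" "0 \<le> \<beta>" "1 \<le> q"
    and "2 ^ (k - 1) * (1 - \<beta> / 2) ^ m \<le> (1/2::real)"
    and "G * ((q + 1/q) / 2) ^ m / q ^ (k - a) < 1/2"
  shows "\<exists>u\<in>{0..<m} \<rightarrow>\<^sub>E \<Omega>. \<forall>A\<in>F. \<beta> * real (card \<Omega>) \<le> real (card A) \<longrightarrow> a < hits m u A"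
proof -
  let ?Sp = "{0..<m} \<rightarrow>\<^sub>E \<Omega>"
  define N where "N = real (card \<Omega>)"
  define Bad where "Bad = {u\<in>?Sp. \<exists>A\<in>F. \<beta> * N \<le> real (card A) \<and> hits m u A \<le> a}"
  have N: "0 < N" using assms(1,2) by (simp add: N_def card_gt_0_iff)
  let ?Gap = "{\<omega>\<in>?Sp \<times> ?Sp. hit_gap F m a k \<omega>}"
  have "real (card Bad) * (N ^ m / 2) * 2 ^ m \<le> real (card ?Gap) * 2 ^ m"
    using card_hit_gap_pairs_ge[OF assms(1,3,6,5,8)] by (simp add: Bad_def N_def)
  also have "\<dots> \<le> N ^ m * N ^ m * (G * ((q + 1/q) ^ m / q ^ (k - a)))"
    using card_hit_gap_pairs_le[OF assms(1) growth assms(5,7)] by (simp add: N_def mult.commute)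
  also have "\<dots> = N ^ m * N ^ m * 2 ^ m * (G * ((q + 1/q) / 2) ^ m / q ^ (k - a))"
    by (simp add: power_divide)
  also have "\<dots> < N ^ m * N ^ m * 2 ^ m * (1/2)"
    using N assms(9) by (intro mult_strict_left_mono) auto
  finally have "real (card Bad) < real (card ?Sp)"
    using N by (simp add: card_PiE N_def)
  moreover have "finite Bad" using assms(1) by (simp add: Bad_def finite_PiE)
  ultimately have "\<not> ?Sp \<subseteq> Bad" using card_mono[of Bad ?Sp] by linarith
  then obtain u where u: "u \<in> ?Sp" "u \<notin> Bad" by blast
  have "a < hits m u A" if "A \<in> F" "\<beta> * real (card \<Omega>) \<le> real (card A)" for A
  proof -
    have "\<not> hits m u A \<le> a" using u that by (auto simp: Bad_def N_def)
    then show ?thesis by simp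
  qed
  with u(1) show ?thesis by blast
qed

section \<open>Weak learning and boosting\<close>

definition agreeing :: "('a \<Rightarrow> bool) set \<Rightarrow> ('a \<Rightarrow> bool) \<Rightarrow> 'a set \<Rightarrow> 'a \<Rightarrow> bool" where
  "agreeing C c U = (SOME h. h \<in> C \<and> (\<forall>x\<in>U. h x = c x))"

lemma
  assumes "c \<in> C"
  shows agreeing_in_class: "agreeing C c U \<in> C"
    and agreeing_agrees: "\<forall>x\<in>U. agreeing C c U x = c x"
proof -
  have "agreeing C c U \<in> C \<and> (\<forall>x\<in>U. agreeing C c U x = c x)"
    unfolding agreeing_def by (rule someI[of _ c]) (use assms in simp)
  then show "agreeing C c U \<in> C" "\<forall>x\<in>U. agreeing C c U x = c x" by auto
qed

lemma agreeing_cong: "\<forall>x\<in>U. c x = c' x \<Longrightarrow> agreeing C c U = agreeing C c' U"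
  unfolding agreeing_def by (metis (no_types, lifting))

lemma card_traces_disagreement_sets_le:
  assumes "vc_dim_le X C d" "P \<subseteq> \<Omega>" "finite P" "fst ` P \<subseteq> X" "card P \<le> n" "1 \<le> d" "d \<le> n"
  shows "real (card ((\<lambda>A. A \<inter> P) ` (\<lambda>h. {\<omega>\<in>\<Omega>. h (fst \<omega>) \<noteq> c (fst \<omega>)}) ` C))
    \<le> (3 * real n / real d) ^ d"
proof -
  define Q where "Q = fst ` P"
  have traces: "(\<lambda>A. A \<inter> P) ` (\<lambda>h. {\<omega>\<in>\<Omega>. h (fst \<omega>) \<noteq> c (fst \<omega>)}) ` C
      = (\<lambda>T. {\<omega>\<in>P. (fst \<omega> \<in> T) \<noteq> c (fst \<omega>)}) ` (\<lambda>h. {x\<in>Q. h x}) ` C"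
    unfolding image_image using assms(2) by (intro image_cong) (auto simp: Q_def)
  have "card ((\<lambda>A. A \<inter> P) ` (\<lambda>h. {\<omega>\<in>\<Omega>. h (fst \<omega>) \<noteq> c (fst \<omega>)}) ` C)
      \<le> card ((\<lambda>h. {x\<in>Q. h x}) ` C)"
    unfolding traces by (rule card_image_le, rule finite_subset[of _ "Pow Q"]) (auto simp: Q_def assms(3))
  moreover have "real (card ((\<lambda>h. {x\<in>Q. h x}) ` C)) \<le> (3 * real n / real d) ^ d"
    using assms card_image_le[OF assms(3), of fst] by (intro card_traces_le) (auto simp: Q_def)
  ultimately show ?thesis by (meson of_nat_le_iff order_trans)
qed

lemma power_lt_of_base_lt:
  fixes x :: real
  assumes "0 \<le> x" "x < B" "B \<le> 1" "1 \<le> d"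
  shows "x ^ d < B"
  using assms power_decreasing[of 1 d x] by (simp add: le_less_trans)

lemma ratio_power_le_inverse_two_power:
  assumes "1 \<le> n"
  shows "(real n / real (n + 1)) ^ (n * t) \<le> 1 / 2 ^ t"
proof -
  have "-1 \<le> 1 / real n" by (rule order_trans[of _ 0]) simp_all
  then have "2 \<le> (1 + 1 / real n) ^ n"
    using Bernoulli_inequality[of "1 / real n" n] assms by simp
  also have "(1 + 1 / real n) ^ n = 1 / (real n / real (n + 1)) ^ n"
    using assms by (simp add: field_simps power_divide)
  finally have "(real n / real (n + 1)) ^ n \<le> 1 / 2"
    using assms by (simp add: field_simps)
  then have "((real n / real (n + 1)) ^ n) ^ t \<le> (1 / 2) ^ t"
    by (intro power_mono) auto
  then show ?thesis by (simp add: power_mult power_one_over)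
qed

lemma power_regroup:
  fixes g y q :: real
  shows "g ^ d * y ^ (n * (c * d)) / q ^ (c * d) = (g * (y ^ n / q) ^ c) ^ d"
  by (simp add: power_mult power_mult_distrib power_divide)

text \<open>The double sampling parameters for the weak learner: m = 64 k points, k = 3096 d, a = 0,
  \<beta> = 1/16, q = 65/64 and growth bound G = (384 * 3096) ^ d = (3 * 2m / d) ^ d.\<close>
lemma weak_learner_constants:
  assumes "1 \<le> d"
  shows "2 ^ (3096 * d - 1) * (1 - 1/16 / 2) ^ (64 * (3096 * d)) \<le> (1/2::real)"
    and "(384 * 3096) ^ d * ((65/64 + 1 / (65/64)) / 2) ^ (64 * (3096 * d)) / (65/64) ^ (3096 * d - 0)
      < (1/2::real)"
proof -
  have "(2::real) * (31/32) ^ 64 \<le> 1" by (simp add: power_divide)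
  then have "(2 * (31/32) ^ 64) ^ (3096 * d) \<le> (1::real)" by (rule power_le_one[rotated]) simp
  then show "2 ^ (3096 * d - 1) * (1 - 1/16 / 2) ^ (64 * (3096 * d)) \<le> (1/2::real)"
    using assms by (simp add: power_mult power_mult_distrib power_diff mult.commute[of 64])
  define \<rho> where "\<rho> = ((65/64 + 1 / (65/64)) / 2) ^ 64 / (65/64::real)"
  have "0 \<le> \<rho>" by (simp add: \<rho>_def)
  have "\<rho> ^ 3096 \<le> (129/130) ^ 3096"
    by (rule power_mono) (simp_all add: \<rho>_def power_divide)
  also have "\<dots> \<le> 1 / 2 ^ 24"
    using ratio_power_le_inverse_two_power[of 129 24] by simp
  finally have "384 * 3096 * \<rho> ^ 3096 < 1/2" by simp
  then have "(384 * 3096 * \<rho> ^ 3096) ^ d < 1/2"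
    by (rule power_lt_of_base_lt[rotated]) (use assms \<open>0 \<le> \<rho>\<close> in auto)
  then show "(384 * 3096) ^ d * ((65/64 + 1 / (65/64)) / 2) ^ (64 * (3096 * d)) / (65/64) ^ (3096 * d - 0)
      < (1/2::real)"
    unfolding diff_zero power_regroup \<rho>_def .
qed

text \<open>Integer weights reduce the weighted problem to the unweighted one on the set \<Omega> in
  which each x is repeated w x times.\<close>
lemma exists_weak_hypothesis:
  fixes w :: "'a \<Rightarrow> nat"
  assumes "vc_dim_le X C d" "1 \<le> d" "c \<in> C" "finite Y" "Y \<subseteq> X" "Y \<noteq> {}"
    and "\<forall>x\<in>Y. 0 < w x"
  shows "\<exists>v\<in>{0..<64 * (3096 * d)} \<rightarrow>\<^sub>E Y.
    16 * (\<Sum>x\<in>{x\<in>Y. agreeing C c (v ` {0..<64 * (3096 * d)}) x \<noteq> c x}. w x) < (\<Sum>x\<in>Y. w x)"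
proof -
  define m where "m = 64 * (3096 * d)"
  define \<Omega> where "\<Omega> = Sigma Y (\<lambda>x. {0..<w x})"
  define F where "F = (\<lambda>h. {\<omega>\<in>\<Omega>. h (fst \<omega>) \<noteq> c (fst \<omega>)}) ` C"
  have fin: "finite \<Omega>" using assms(4) by (simp add: \<Omega>_def)
  obtain y where "y \<in> Y" using assms(6) by blast
  then have "(y, 0) \<in> \<Omega>" using assms(7) by (simp add: \<Omega>_def)
  then have "\<Omega> \<noteq> {}" by blast
  have growth: "\<forall>P\<subseteq>\<Omega>. card P \<le> 2 * m \<longrightarrow> real (card ((\<lambda>A. A \<inter> P) ` F)) \<le> (384 * 3096) ^ d"
  proof (intro allI impI)
    fix P assume P: "P \<subseteq> \<Omega>" "card P \<le> 2 * m"
    have "real (card ((\<lambda>A. A \<inter> P) ` F)) \<le> (3 * real (2 * m) / real d) ^ d"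
      unfolding F_def using P assms(1,2,5) finite_subset[OF P(1) fin]
      by (intro card_traces_disagreement_sets_le) (auto simp: \<Omega>_def m_def)
    then show "real (card ((\<lambda>A. A \<inter> P) ` F)) \<le> (384 * 3096) ^ d"
      using assms(2) by (simp add: m_def)
  qed
  obtain u where u: "u \<in> {0..<m} \<rightarrow>\<^sub>E \<Omega>"
    and hit: "\<forall>A\<in>F. 1/16 * real (card \<Omega>) \<le> real (card A) \<longrightarrow> 0 < hits m u A"
    using exists_seq_hitting_large_sets[OF fin \<open>\<Omega> \<noteq> {}\<close> _ growth, of 0 "3096 * d" "1/16" "65/64"]
      weak_learner_constants[OF assms(2)] assms(2) by (auto simp: F_def m_def)
  define v where "v j = (if j < m then fst (u j) else undefined)" for j
  have v: "v \<in> {0..<m} \<rightarrow>\<^sub>E Y" using u by (auto simp: v_def \<Omega>_def PiE_iff extensional_def)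
  define h where "h = agreeing C c (v ` {0..<m})"
  define A where "A = {\<omega>\<in>\<Omega>. h (fst \<omega>) \<noteq> c (fst \<omega>)}"
  have "A \<in> F" using agreeing_in_class[OF assms(3)] by (auto simp: A_def F_def h_def)
  moreover have "hits m u A = 0"
    using agreeing_agrees[OF assms(3)] by (auto simp: hits_def A_def h_def v_def)
  ultimately have "real (card A) < 1/16 * real (card \<Omega>)" using hit by force
  then have "16 * card A < card \<Omega>" by linarith
  moreover have "card A = (\<Sum>x\<in>{x\<in>Y. h x \<noteq> c x}. w x)"
  proof -
    have "A = Sigma {x\<in>Y. h x \<noteq> c x} (\<lambda>x. {0..<w x})" by (auto simp: A_def \<Omega>_def)
    then show ?thesis using assms(4) by simp
  qed
  moreover have "card \<Omega> = (\<Sum>x\<in>Y. w x)" using assms(4) by (simp add: \<Omega>_def)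
  ultimately show ?thesis using v unfolding h_def m_def by (intro bexI[of _ v]) auto
qed

text \<open>Boosting by multiplicative weights: each point carries weight 2 to the power of the
  number of hypotheses so far that err on it, and the next hypothesis is a weak one for
  these weights.\<close>
lemma exists_boosted_sequence:
  fixes c :: "'a \<Rightarrow> bool"
  assumes "finite Y"
    and weak: "\<And>w::'a \<Rightarrow> nat. \<forall>x\<in>Y. 0 < w x \<Longrightarrow>
      \<exists>h\<in>H. 16 * (\<Sum>x\<in>{x\<in>Y. h x \<noteq> c x}. w x) < (\<Sum>x\<in>Y. w x)"
  shows "\<exists>hs. (\<forall>t<T. hs t \<in> H) \<and>
    real (\<Sum>x\<in>Y. 2 ^ card {t\<in>{0..<T}. hs t x \<noteq> c x}) \<le> real (card Y) * (17/16) ^ T"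
proof (induction T)
  case 0
  show ?case by simp
next
  case (Suc T)
  then obtain hs where hs: "\<forall>t<T. hs t \<in> H"
    and bound: "real (\<Sum>x\<in>Y. 2 ^ card {t\<in>{0..<T}. hs t x \<noteq> c x}) \<le> real (card Y) * (17/16) ^ T"
    by blast
  define M where "M x = card {t\<in>{0..<T}. hs t x \<noteq> c x}" for x
  obtain h where "h \<in> H" and h: "16 * (\<Sum>x\<in>{x\<in>Y. h x \<noteq> c x}. 2 ^ M x) < (\<Sum>x\<in>Y. (2::nat) ^ M x)"
    using weak[of "\<lambda>x. 2 ^ M x"] by auto
  define hs' where "hs' = hs(T := h)"
  have "(2::nat) ^ card {t\<in>{0..<Suc T}. hs' t x \<noteq> c x} = 2 ^ M x + (if h x \<noteq> c x then 2 ^ M x else 0)"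
    for x
  proof -
    have "{t\<in>{0..<Suc T}. hs' t x \<noteq> c x}
        = (if h x \<noteq> c x then insert T else id) {t\<in>{0..<T}. hs t x \<noteq> c x}"
      by (auto simp: hs'_def)
    then show ?thesis by (simp add: M_def)
  qed
  then have "(\<Sum>x\<in>Y. (2::nat) ^ card {t\<in>{0..<Suc T}. hs' t x \<noteq> c x})
      = (\<Sum>x\<in>Y. 2 ^ M x) + (\<Sum>x\<in>{x\<in>Y. h x \<noteq> c x}. 2 ^ M x)"
    using assms(1) by (simp add: sum.distrib sum.inter_filter)
  then have "real (\<Sum>x\<in>Y. (2::nat) ^ card {t\<in>{0..<Suc T}. hs' t x \<noteq> c x})
      \<le> 17/16 * real (\<Sum>x\<in>Y. (2::nat) ^ M x)"
    using h by linarith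
  also have "\<dots> \<le> real (card Y) * (17/16) ^ Suc T"
    using bound by (simp add: M_def)
  finally show ?case using hs \<open>h \<in> H\<close> by (intro exI[of _ hs']) (auto simp: hs'_def)
qed

text \<open>After T = 10 K rounds with card Y < (2 / (17/16) ^ 10) ^ K the potential is below 2 ^ K,
  so every point is misclassified fewer than K times.\<close>
lemma exists_sequence_mostly_correct:
  fixes c :: "'a \<Rightarrow> bool"
  assumes "finite Y"
    and weak: "\<And>w::'a \<Rightarrow> nat. \<forall>x\<in>Y. 0 < w x \<Longrightarrow>
      \<exists>h\<in>H. 16 * (\<Sum>x\<in>{x\<in>Y. h x \<noteq> c x}. w x) < (\<Sum>x\<in>Y. w x)"
  shows "\<exists>T hs. 0 < T \<and> (\<forall>t<T. hs t \<in> H) \<and>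
    (\<forall>x\<in>Y. 9/10 * real T \<le> real (card {t\<in>{0..<T}. hs t x = c x}))"
proof -
  define b where "b = (2::real) / (17/16) ^ 10"
  have "1 < b" by (simp add: b_def power_divide)
  then obtain n where n: "real (card Y) < b ^ n" using real_arch_pow by blast
  define K where "K = Suc n"
  have "b ^ n \<le> b ^ K" using \<open>1 < b\<close> by (intro power_increasing) (auto simp: K_def)
  then have "real (card Y) * (17/16) ^ (10 * K) < b ^ K * ((17/16) ^ 10) ^ K"
    using n by (simp add: power_mult)
  also have "\<dots> = 2 ^ K" by (simp add: b_def flip: power_mult_distrib)
  finally have small: "real (card Y) * (17/16) ^ (10 * K) < 2 ^ K" .
  obtain hs where hs: "\<forall>t<10 * K. hs t \<in> H"
    and bound: "real (\<Sum>x\<in>Y. 2 ^ card {t\<in>{0..<10 * K}. hs t x \<noteq> c x}) \<le> real (card Y) * (17/16) ^ (10 * K)"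
    using exists_boosted_sequence[OF assms] by blast
  have "9/10 * real (10 * K) \<le> real (card {t\<in>{0..<10 * K}. hs t x = c x})" if "x \<in> Y" for x
  proof -
    have "(2::nat) ^ card {t\<in>{0..<10 * K}. hs t x \<noteq> c x} \<le> (\<Sum>x\<in>Y. 2 ^ card {t\<in>{0..<10 * K}. hs t x \<noteq> c x})"
      using that assms(1) by (intro member_le_sum) auto
    then have "(2::real) ^ card {t\<in>{0..<10 * K}. hs t x \<noteq> c x}
        \<le> real (\<Sum>x\<in>Y. 2 ^ card {t\<in>{0..<10 * K}. hs t x \<noteq> c x})"
      using of_nat_mono by fastforce
    then have "(2::real) ^ card {t\<in>{0..<10 * K}. hs t x \<noteq> c x} < 2 ^ K"
      using bound small by linarith
    then have "card {t\<in>{0..<10 * K}. hs t x \<noteq> c x} < K"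
      by (simp add: power_strict_increasing_iff)
    moreover have "card {t\<in>{0..<10 * K}. hs t x = c x} + card {t\<in>{0..<10 * K}. hs t x \<noteq> c x} = 10 * K"
      using card_filter_add_card_filter_not[of "{0..<10 * K}" "\<lambda>t. hs t x = c x"] by simp
    ultimately show ?thesis by linarith
  qed
  then show ?thesis using hs by (intro exI[of _ "10 * K"] exI[of _ hs]) (auto simp: K_def)
qed

section \<open>Sparsification by the dual class\<close>

definition majority :: "nat \<Rightarrow> (nat \<Rightarrow> 'a \<Rightarrow> bool) \<Rightarrow> 'a \<Rightarrow> bool" where
  "majority r hs x \<longleftrightarrow> r < 2 * card {j\<in>{0..<r}. hs j x}"

lemma majority_eqI:
  assumes "r < 2 * card {j\<in>{0..<r}. hs j x = b}"
  shows "majority r hs x = b"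
proof (cases b)
  case False
  have "card {j\<in>{0..<r}. \<not> hs j x} + card {j\<in>{0..<r}. hs j x} = r"
    using card_filter_add_card_filter_not[of "{0..<r}" "\<lambda>j. \<not> hs j x"] by simp
  then show ?thesis using assms False by (simp add: majority_def)
qed (use assms in \<open>simp add: majority_def\<close>)

lemma card_traces_agreement_sets_le:
  assumes "vc_dim_le C (dual_class X) d" "finite P" "card P \<le> n" "1 \<le> d" "d \<le> n"
    "g ` P \<subseteq> C" "Y \<subseteq> X"
  shows "real (card ((\<lambda>x. {t\<in>P. g t x = c x}) ` Y)) \<le> 2 * (3 * real n / real d) ^ d"
proof -
  define E where "E = (\<lambda>x. {t\<in>P. g t x}) ` Y"
  have "finite E" using assms(2) by (intro finite_subset[of E "Pow P"]) (auto simp: E_def)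
  have "(\<lambda>x. {t\<in>P. g t x = c x}) ` Y \<subseteq> E \<union> (\<lambda>B. P - B) ` E"
  proof (rule image_subsetI)
    fix x assume "x \<in> Y"
    then have "{t\<in>P. g t x} \<in> E" by (simp add: E_def)
    moreover have "{t\<in>P. g t x = c x} = (if c x then {t\<in>P. g t x} else P - {t\<in>P. g t x})" by auto
    ultimately show "{t\<in>P. g t x = c x} \<in> E \<union> (\<lambda>B. P - B) ` E" by simp
  qed
  then have "card ((\<lambda>x. {t\<in>P. g t x = c x}) ` Y) \<le> card E + card ((\<lambda>B. P - B) ` E)"
    using \<open>finite E\<close> by (meson card_Un_le card_mono finite_UnI finite_imageI order_trans)
  also have "\<dots> \<le> 2 * card E" using card_image_le[OF \<open>finite E\<close>] by simp
  finally have "real (card ((\<lambda>x. {t\<in>P. g t x = c x}) ` Y)) \<le> 2 * real (card E)" by linarith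
  also have "\<dots> \<le> 2 * (3 * real n / real d) ^ d"
    using card_dual_traces_le[OF assms] by (simp add: E_def)
  finally show ?thesis .
qed

text \<open>The double sampling parameters for sparsification: m = 8 c points with c = 256 d,
  k = 5 c, a = 4 c, \<beta> = 9/10, q = 9/8 and growth bound G = 2 * (48 * 256) ^ d = 2 * (3 * 2m / d) ^ d.\<close>
lemma sparsification_constants:
  assumes "1 \<le> d"
  shows "2 ^ (5 * (256 * d) - 1) * (1 - 9/10 / 2) ^ (8 * (256 * d)) \<le> (1/2::real)"
    and "2 * (48 * 256) ^ d * ((9/8 + 1 / (9/8)) / 2) ^ (8 * (256 * d))
      / (9/8) ^ (5 * (256 * d) - 4 * (256 * d)) < (1/2::real)"
proof -
  have "(2::real) ^ 5 * (11/20) ^ 8 \<le> 1" by (simp add: power_divide)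
  then have "(2 ^ 5 * (11/20) ^ 8) ^ (256 * d) \<le> (1::real)" by (rule power_le_one[rotated]) simp
  then show "2 ^ (5 * (256 * d) - 1) * (1 - 9/10 / 2) ^ (8 * (256 * d)) \<le> (1/2::real)"
    using assms by (simp add: power_mult power_mult_distrib power_diff mult.commute[of 5] mult.commute[of 8])
  define \<rho> where "\<rho> = ((9/8 + 1 / (9/8)) / 2) ^ 8 / (9/8::real)"
  have "0 \<le> \<rho>" by (simp add: \<rho>_def)
  have "\<rho> ^ 256 \<le> (16/17) ^ 256"
    by (rule power_mono) (simp_all add: \<rho>_def power_divide)
  also have "\<dots> \<le> 1 / 2 ^ 16"
    using ratio_power_le_inverse_two_power[of 16 16] by simp
  finally have "48 * 256 * \<rho> ^ 256 < 1/4" by simp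
  then have "(48 * 256 * \<rho> ^ 256) ^ d < 1/4"
    by (rule power_lt_of_base_lt[rotated]) (use assms \<open>0 \<le> \<rho>\<close> in auto)
  have "2 * (48 * 256) ^ d * ((9/8 + 1 / (9/8)) / 2) ^ (8 * (256 * d))
      / (9/8) ^ (5 * (256 * d) - 4 * (256 * d))
    = 2 * ((48 * 256) ^ d * ((9/8 + 1 / (9/8)) / 2) ^ (8 * (256 * d)) / (9/8::real) ^ (256 * d))"
    by simp
  also have "\<dots> = 2 * (48 * 256 * \<rho> ^ 256) ^ d"
    unfolding power_regroup \<rho>_def ..
  also have "\<dots> < 1/2" using \<open>(48 * 256 * \<rho> ^ 256) ^ d < 1/4\<close> by simp
  finally show "2 * (48 * 256) ^ d * ((9/8 + 1 / (9/8)) / 2) ^ (8 * (256 * d))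
      / (9/8) ^ (5 * (256 * d) - 4 * (256 * d)) < (1/2::real)" .
qed

text \<open>The sets of hypotheses that are right at a given point form a class of VC dimension at
  most d*, so double sampling finds O(d*) of the hypotheses whose majority keeps the margin.\<close>
lemma exists_sparse_majority:
  assumes "vc_dim_le C (dual_class X) d" "1 \<le> d" "finite Y" "Y \<subseteq> X" "0 < T"
    and "\<forall>t<T. g t \<in> C"
    and "\<forall>x\<in>Y. 9/10 * real T \<le> real (card {t\<in>{0..<T}. g t x = c x})"
  shows "\<exists>u\<in>{0..<8 * (256 * d)} \<rightarrow>\<^sub>E {0..<T}. \<forall>x\<in>Y. majority (8 * (256 * d)) (\<lambda>j. g (u j)) x = c x"
proof -
  define r where "r = 8 * (256 * d)"
  define F where "F = (\<lambda>x. {t\<in>{0..<T}. g t x = c x}) ` Y"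
  have growth: "\<forall>P\<subseteq>{0..<T}. card P \<le> 2 * r \<longrightarrow> real (card ((\<lambda>A. A \<inter> P) ` F)) \<le> 2 * (48 * 256) ^ d"
  proof (intro allI impI)
    fix P assume P: "P \<subseteq> {0..<T}" "card P \<le> 2 * r"
    have "(\<lambda>A. A \<inter> P) ` F = (\<lambda>x. {t\<in>P. g t x = c x}) ` Y"
      unfolding F_def image_image using P(1) by (intro image_cong) auto
    moreover have "real (card ((\<lambda>x. {t\<in>P. g t x = c x}) ` Y)) \<le> 2 * (3 * real (2 * r) / real d) ^ d"
      using P assms(1,2,4,6) finite_subset[OF P(1)]
      by (intro card_traces_agreement_sets_le) (auto simp: r_def)
    ultimately show "real (card ((\<lambda>A. A \<inter> P) ` F)) \<le> 2 * (48 * 256) ^ d"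
      using assms(2) by (simp add: r_def)
  qed
  obtain u where u: "u \<in> {0..<r} \<rightarrow>\<^sub>E {0..<T}"
    and hit: "\<forall>A\<in>F. 9/10 * real (card {0..<T}) \<le> real (card A) \<longrightarrow> 4 * (256 * d) < hits r u A"
  proof (rule exists_seq_hitting_large_sets[OF _ _ _ growth _ _ _
        sparsification_constants[OF assms(2), folded r_def], THEN bexE])
    show "\<forall>A\<in>F. A \<subseteq> {0..<T}" by (auto simp: F_def)
  qed (use assms(2,5) in auto)
  have "majority r (\<lambda>j. g (u j)) x = c x" if "x \<in> Y" for x
  proof (rule majority_eqI)
    have "hits r u {t\<in>{0..<T}. g t x = c x} = card {j\<in>{0..<r}. g (u j) x = c x}"
      using u unfolding hits_def by (intro arg_cong[where f=card]) (auto simp: PiE_iff)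
    then show "r < 2 * card {j\<in>{0..<r}. g (u j) x = c x}"
      using hit assms(7) that by (auto simp: F_def r_def)
  qed
  then show ?thesis using u by (auto simp: r_def)
qed

lemma exists_majority_of_agreeing_hypotheses:
  assumes "vc_dim_le X C d" "vc_dim_le C (dual_class X) d'" "1 \<le> d" "1 \<le> d'"
    and "c \<in> C" "finite Y" "Y \<subseteq> X" "Y \<noteq> {}"
  shows "\<exists>V. (\<forall>j<8 * (256 * d'). V j \<in> {0..<64 * (3096 * d)} \<rightarrow>\<^sub>E Y) \<and>
    (\<forall>x\<in>Y. majority (8 * (256 * d')) (\<lambda>j. agreeing C c (V j ` {0..<64 * (3096 * d)})) x = c x)"
proof -
  define s where "s = 64 * (3096 * d)"
  define H where "H = (\<lambda>v. agreeing C c (v ` {0..<s})) ` ({0..<s} \<rightarrow>\<^sub>E Y)"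
  obtain T hs where "0 < T" and hs: "\<forall>t<T. hs t \<in> H"
    and correct: "\<forall>x\<in>Y. 9/10 * real T \<le> real (card {t\<in>{0..<T}. hs t x = c x})"
    using exists_sequence_mostly_correct[OF assms(6), of H c]
      exists_weak_hypothesis[OF assms(1,3,5-8)] by (force simp: H_def s_def)
  have "\<forall>t<T. hs t \<in> C" using hs agreeing_in_class[OF assms(5)] by (auto simp: H_def)
  then obtain u where u: "u \<in> {0..<8 * (256 * d')} \<rightarrow>\<^sub>E {0..<T}"
    and maj: "\<forall>x\<in>Y. majority (8 * (256 * d')) (\<lambda>j. hs (u j)) x = c x"
    using exists_sparse_majority[OF assms(2,4,6,7) \<open>0 < T\<close> _ correct] by blast
  have "\<forall>j<8 * (256 * d'). \<exists>v\<in>{0..<s} \<rightarrow>\<^sub>E Y. hs (u j) = agreeing C c (v ` {0..<s})"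
  proof (intro allI impI)
    fix j assume "j < 8 * (256 * d')"
    then have "hs (u j) \<in> H" using u hs by (auto simp: PiE_iff)
    then show "\<exists>v\<in>{0..<s} \<rightarrow>\<^sub>E Y. hs (u j) = agreeing C c (v ` {0..<s})"
      by (simp add: H_def image_iff)
  qed
  then obtain V where V: "\<forall>j<8 * (256 * d'). V j \<in> {0..<s} \<rightarrow>\<^sub>E Y \<and> hs (u j) = agreeing C c (V j ` {0..<s})"
    by metis
  have "{j\<in>{0..<8 * (256 * d')}. agreeing C c (V j ` {0..<s}) x} = {j\<in>{0..<8 * (256 * d')}. hs (u j) x}"
    for x using V by auto
  then have "majority (8 * (256 * d')) (\<lambda>j. agreeing C c (V j ` {0..<s})) x
      = majority (8 * (256 * d')) (\<lambda>j. hs (u j)) x" for x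
    by (simp add: majority_def)
  with V maj show ?thesis unfolding s_def by (intro exI[of _ V]) auto
qed

section \<open>The compression scheme\<close>

lemma sample_label_eq:
  assumes "K \<subseteq># S" "\<forall>p\<in>#S. c (fst p) = snd p" "x \<in> fst ` set_mset K"
  shows "(x, True) \<in># K \<longleftrightarrow> c x"
proof -
  obtain b where "(x, b) \<in># K" using assms(3) by force
  moreover have "c (fst p) = snd p" if "p \<in># K" for p using that assms(1,2) by (meson mset_subset_eqD)
  ultimately show ?thesis by (metis fst_conv snd_conv)
qed

lemma exists_submultiset_with_points:
  assumes "\<forall>p\<in>#S. c (fst p) = snd p" "W \<subseteq> fst ` set_mset S"
  shows "\<exists>K. K \<subseteq># S \<and> size K = card W \<and> fst ` set_mset K = W"
proof -
  define P where "P = {p\<in>set_mset S. fst p \<in> W}"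
  have "finite P" by (simp add: P_def)
  have inj: "inj_on fst P"
  proof (rule inj_onI)
    fix p q assume "p \<in> P" "q \<in> P" "fst p = fst q"
    then have "snd p = snd q" using assms(1) by (metis P_def mem_Collect_eq)
    with \<open>fst p = fst q\<close> show "p = q" by (rule prod_eqI)
  qed
  have points: "fst ` P = W"
  proof
    show "W \<subseteq> fst ` P"
    proof
      fix x assume "x \<in> W"
      then obtain p where "p \<in># S" "x = fst p" using assms(2) by blast
      with \<open>x \<in> W\<close> show "x \<in> fst ` P" by (auto simp: P_def)
    qed
  qed (auto simp: P_def)
  have "P \<subseteq> set_mset S" by (auto simp: P_def)
  then have "mset_set P \<subseteq># mset_set (set_mset S)" by (rule subset_imp_msubset_mset_set) simp
  also have "\<dots> \<subseteq># S" by (rule mset_set_set_mset_msubset)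
  finally have "mset_set P \<subseteq># S" .
  moreover have "size (mset_set P) = card W" using card_image[OF inj] points by simp
  moreover have "fst ` set_mset (mset_set P) = W" using \<open>finite P\<close> points by simp
  ultimately show ?thesis by blast
qed

lemma exists_index_of_positions:
  assumes "bij_betw enum {0..<card ({0..<R} \<rightarrow>\<^sub>E {0..<R})} ({0..<R} \<rightarrow>\<^sub>E {0..<R})"
    and "length xs \<le> R" "\<forall>p<R. g p \<in> set xs"
  shows "\<exists>i\<in>{0..<R ^ R}. \<forall>p<R. xs ! enum i p = g p"
proof -
  have "\<forall>p. \<exists>n. p < R \<longrightarrow> n < length xs \<and> xs ! n = g p"
    using assms(3) by (auto simp: in_set_conv_nth)
  then obtain f where f: "\<forall>p<R. f p < length xs \<and> xs ! f p = g p"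
    using choice[of "\<lambda>p n. p < R \<longrightarrow> n < length xs \<and> xs ! n = g p"] by blast
  define f' where "f' = restrict f {0..<R}"
  have "f' \<in> {0..<R} \<rightarrow>\<^sub>E {0..<R}" using f assms(2) by (auto simp: f'_def)
  then have "f' \<in> enum ` {0..<card ({0..<R} \<rightarrow>\<^sub>E {0..<R})}"
    using bij_betw_imp_surj_on[OF assms(1)] by simp
  then obtain i where "i \<in> {0..<card ({0..<R} \<rightarrow>\<^sub>E {0..<R})}" "enum i = f'" by blast
  then show ?thesis using f by (intro bexI[of _ i]) (auto simp: f'_def card_PiE)
qed

definition subsample :: "nat \<Rightarrow> (nat \<Rightarrow> nat \<Rightarrow> nat) \<Rightarrow> ('a::linorder \<times> bool) multiset \<Rightarrow> nat \<Rightarrow> nat \<Rightarrow> 'a set"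
  where "subsample s enum K i j = (\<lambda>l. sorted_list_of_set (fst ` set_mset K) ! enum i (j * s + l)) ` {0..<s}"

text \<open>The reconstruction function: the side information i encodes, via enum, a map from the r*s
  sample positions to indices into the sorted list of points of the kernel K.\<close>
definition majority_reconstruction ::
  "('a::linorder \<Rightarrow> bool) set \<Rightarrow> nat \<Rightarrow> nat \<Rightarrow> (nat \<Rightarrow> nat \<Rightarrow> nat) \<Rightarrow> ('a \<times> bool) multiset \<Rightarrow> nat \<Rightarrow> 'a \<Rightarrow> bool"
  where "majority_reconstruction C r s enum K i =
    majority r (\<lambda>j. agreeing C (\<lambda>x. (x, True) \<in># K) (subsample s enum K i j))"

lemma subsample_eq:
  assumes "j < r" "fst ` set_mset K = W"
    and "\<forall>p<r * s. sorted_list_of_set W ! enum i p = V (p div s) (p mod s)"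
  shows "subsample s enum K i j = V j ` {0..<s}"
  unfolding subsample_def
proof (rule image_cong[OF refl])
  fix l assume "l \<in> {0..<s}"
  then have "j * s + l < (j + 1) * s" by simp
  also have "\<dots> \<le> r * s" using assms(1) by (simp add: mult_right_mono del: mult_Suc)
  finally have "j * s + l < r * s" .
  moreover have "(j * s + l) div s = j" "(j * s + l) mod s = l" using \<open>l \<in> {0..<s}\<close> by auto
  ultimately show "sorted_list_of_set (fst ` set_mset K) ! enum i (j * s + l) = V j l"
    using assms(2,3) by simp
qed

lemma exists_kernel_and_index:
  fixes S :: "('a::linorder \<times> bool) multiset"
  assumes enum: "bij_betw enum {0..<card ({0..<r * s} \<rightarrow>\<^sub>E {0..<r * s})} ({0..<r * s} \<rightarrow>\<^sub>E {0..<r * s})"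
    and "0 < s" and c: "\<forall>p\<in>#S. c (fst p) = snd p"
    and V: "\<forall>j<r. V j \<in> {0..<s} \<rightarrow>\<^sub>E fst ` set_mset S"
    and correct: "\<forall>x\<in>fst ` set_mset S. majority r (\<lambda>j. agreeing C c (V j ` {0..<s})) x = c x"
  shows "\<exists>K i. K \<subseteq># S \<and> size K \<le> r * s \<and> i \<in> {0..<(r * s) ^ (r * s)} \<and>
    (\<forall>p\<in>#S. majority_reconstruction C r s enum K i (fst p) = snd p)"
proof -
  define W where "W = (\<Union>j<r. V j ` {0..<s})"
  have "W \<subseteq> fst ` set_mset S" using V by (auto simp: W_def PiE_iff)
  have "card W \<le> (\<Sum>j<r. card (V j ` {0..<s}))"
    unfolding W_def by (rule card_UN_le) simp
  also have "\<dots> \<le> (\<Sum>j<r. s)"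
    by (intro sum_mono) (simp add: card_image_le[THEN order_trans])
  finally have "card W \<le> r * s" by simp
  obtain K where "K \<subseteq># S" "size K = card W" and points: "fst ` set_mset K = W"
    using exists_submultiset_with_points[OF c \<open>W \<subseteq> _\<close>] by blast
  have positions: "\<forall>p<r * s. V (p div s) (p mod s) \<in> set (sorted_list_of_set W)"
  proof (intro allI impI)
    fix p assume "p < r * s"
    then have "p div s < r" by (simp add: less_mult_imp_div_less)
    moreover have "p mod s \<in> {0..<s}" using \<open>0 < s\<close> by simp
    ultimately have "V (p div s) (p mod s) \<in> W" unfolding W_def by (intro UN_I imageI) auto
    then show "V (p div s) (p mod s) \<in> set (sorted_list_of_set W)" by (simp add: W_def)
  qed
  have "length (sorted_list_of_set W) \<le> r * s" using \<open>card W \<le> r * s\<close> by simp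
  from exists_index_of_positions[OF enum this positions] obtain i where "i \<in> {0..<(r * s) ^ (r * s)}"
    and i: "\<forall>p<r * s. sorted_list_of_set W ! enum i p = V (p div s) (p mod s)"
    by blast
  have "agreeing C (\<lambda>x. (x, True) \<in># K) (subsample s enum K i j) = agreeing C c (V j ` {0..<s})"
    if "j < r" for j
    unfolding subsample_eq[where V = V and s = s and enum = enum and i = i, OF that points i]
    using that sample_label_eq[OF \<open>K \<subseteq># S\<close> c] by (intro agreeing_cong) (auto simp: points W_def)
  then have "majority_reconstruction C r s enum K i x = majority r (\<lambda>j. agreeing C c (V j ` {0..<s})) x"
    for x by (simp add: majority_reconstruction_def majority_def cong: conj_cong)
  then have "\<forall>p\<in>#S. majority_reconstruction C r s enum K i (fst p) = snd p" using correct c by simp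
  then show ?thesis using \<open>K \<subseteq># S\<close> \<open>size K = card W\<close> \<open>card W \<le> r * s\<close> \<open>i \<in> _\<close>
    by (intro exI[of _ K] exI[of _ i]) auto
qed

lemma compression_scheme_of_majority_votes:
  fixes X :: "'a::linorder set" and C :: "('a \<Rightarrow> bool) set"
  assumes "0 < r" "0 < s"
    and maj: "\<And>c Y. c \<in> C \<Longrightarrow> finite Y \<Longrightarrow> Y \<subseteq> X \<Longrightarrow> Y \<noteq> {} \<Longrightarrow>
      \<exists>V. (\<forall>j<r. V j \<in> {0..<s} \<rightarrow>\<^sub>E Y) \<and> (\<forall>x\<in>Y. majority r (\<lambda>j. agreeing C c (V j ` {0..<s})) x = c x)"
  shows "\<exists>\<kappa> \<rho>. compression_scheme X C (r * s) {0..<(r * s) ^ (r * s)} \<kappa> \<rho>"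
proof -
  define I where "I = {0..<(r * s) ^ (r * s)}"
  obtain enum where enum: "bij_betw enum {0..<card ({0..<r * s} \<rightarrow>\<^sub>E {0..<r * s})} ({0..<r * s} \<rightarrow>\<^sub>E {0..<r * s})"
    using ex_bij_betw_nat_finite[of "{0..<r * s} \<rightarrow>\<^sub>E {0..<r * s}"] by (auto simp: finite_PiE)
  define good where "good S K i \<longleftrightarrow> K \<subseteq># S \<and> size K \<le> r * s \<and> i \<in> I \<and>
    (\<forall>p\<in>#S. majority_reconstruction C r s enum K i (fst p) = snd p)" for S K i
  have "\<exists>K i. good S K i" if S: "labeled_sample X C S" for S
  proof (cases "S = {#}")
    case True
    then show ?thesis using assms(1,2) by (intro exI[of _ "{#}"] exI[of _ 0]) (simp add: good_def I_def)
  next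
    case False
    obtain c where "c \<in> C" and c: "\<forall>p\<in>#S. c (fst p) = snd p" and "fst ` set_mset S \<subseteq> X"
      using S by (auto simp: labeled_sample_def image_subset_iff)
    with False obtain V where "\<forall>j<r. V j \<in> {0..<s} \<rightarrow>\<^sub>E fst ` set_mset S"
      and "\<forall>x\<in>fst ` set_mset S. majority r (\<lambda>j. agreeing C c (V j ` {0..<s})) x = c x"
      using maj[of c "fst ` set_mset S"] by auto
    from exists_kernel_and_index[OF enum \<open>0 < s\<close> c this] show ?thesis by (auto simp: good_def I_def)
  qed
  then have "good S (fst (SOME Ki. good S (fst Ki) (snd Ki))) (snd (SOME Ki. good S (fst Ki) (snd Ki)))"
    if "labeled_sample X C S" for S
    using that by (intro someI_ex[of "\<lambda>Ki. good S (fst Ki) (snd Ki)"]) simp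
  then have "compression_scheme X C (r * s) I (\<lambda>S. SOME Ki. good S (fst Ki) (snd Ki))
      (majority_reconstruction C r s enum)"
    by (auto simp: compression_scheme_def good_def I_def)
  then show ?thesis by (auto simp: I_def)
qed

lemma exists_compression_scheme:
  fixes X :: "'a::linorder set"
  assumes "vc_dim_le X C d" "vc_dim_le C (dual_class X) d'" "1 \<le> d" "1 \<le> d'"
  shows "\<exists>\<kappa> \<rho>. compression_scheme X C (8 * (256 * d') * (64 * (3096 * d)))
    {0..<(8 * (256 * d') * (64 * (3096 * d))) ^ (8 * (256 * d') * (64 * (3096 * d)))} \<kappa> \<rho>"
proof (rule compression_scheme_of_majority_votes)
  show "\<exists>V. (\<forall>j<8 * (256 * d'). V j \<in> {0..<64 * (3096 * d)} \<rightarrow>\<^sub>E Y) \<and>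
      (\<forall>x\<in>Y. majority (8 * (256 * d')) (\<lambda>j. agreeing C c (V j ` {0..<64 * (3096 * d)})) x = c x)"
    if "c \<in> C" "finite Y" "Y \<subseteq> X" "Y \<noteq> {}" for c Y
    by (rule exists_majority_of_agreeing_hypotheses[OF assms that])
qed (use assms(3,4) in auto)

lemma kernel_size_add_log_le:
  assumes "1 \<le> R"
  shows "real R + log 2 (real (R ^ R)) \<le> (2 * real R) * log 2 (2 * real R)"
proof -
  have "0 \<le> log 2 (real R)" using assms by simp
  then have "real R + log 2 (real (R ^ R)) \<le> 2 * real R * (1 + log 2 (real R))"
    by (simp add: log_nat_power algebra_simps)
  also have "\<dots> = 2 * real R * log 2 (2 * real R)"
    using assms by (simp add: log_mult)
  finally show ?thesis .
qed

theorem theorem4: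
  shows "\<exists>a::real. a > 0 \<and>
    (\<forall>(X::nat set) (C::(nat \<Rightarrow> bool) set) (d::nat) (ds::nat).
       (\<forall>c\<in>C. \<forall>x. x \<notin> X \<longrightarrow> \<not> c x) \<and>
       has_vc_dim X C d \<and> 0 < d \<and>
       has_vc_dim C (dual_class X) ds \<and> 0 < ds \<longrightarrow>
       (\<exists>(k::nat) (I::nat set) \<kappa> \<rho>.
          compression_scheme X C k I \<kappa> \<rho> \<and> I \<noteq> {} \<and>
          real k + log 2 (real (card I))
            \<le> (a * real ds * real d) * log 2 (a * real ds * real d)))"
proof (intro exI[of _ "811597824::real"] conjI allI impI)
  fix X :: "nat set" and C :: "(nat \<Rightarrow> bool) set" and d ds :: nat
  assume "(\<forall>c\<in>C. \<forall>x. x \<notin> X \<longrightarrow> \<not> c x) \<and> has_vc_dim X C d \<and> 0 < d \<and>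
    has_vc_dim C (dual_class X) ds \<and> 0 < ds"
  then have vc: "vc_dim_le X C d" "vc_dim_le C (dual_class X) ds" and "1 \<le> d" "1 \<le> ds"
    by (auto intro: has_vc_dim_imp_vc_dim_le)
  define R where "R = 8 * (256 * ds) * (64 * (3096 * d))"
  obtain \<kappa> \<rho> where "compression_scheme X C R {0..<R ^ R} \<kappa> \<rho>"
    using exists_compression_scheme[OF vc \<open>1 \<le> d\<close> \<open>1 \<le> ds\<close>] unfolding R_def by blast
  have "1 \<le> R" using \<open>1 \<le> d\<close> \<open>1 \<le> ds\<close> by (simp add: R_def)
  have scale: "811597824 * real ds * real d = 2 * real R" by (simp add: R_def)
  have "real R + log 2 (real (card {0..<R ^ R}))
      \<le> (811597824 * real ds * real d) * log 2 (811597824 * real ds * real d)"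
    unfolding scale card_atLeastLessThan diff_zero by (rule kernel_size_add_log_le[OF \<open>1 \<le> R\<close>])
  moreover have "{0..<R ^ R} \<noteq> {}" using \<open>1 \<le> R\<close> by simp
  ultimately show "\<exists>k (I::nat set) \<kappa> \<rho>. compression_scheme X C k I \<kappa> \<rho> \<and> I \<noteq> {} \<and>
      real k + log 2 (real (card I)) \<le> (811597824 * real ds * real d) * log 2 (811597824 * real ds * real d)"
    using \<open>compression_scheme X C R {0..<R ^ R} \<kappa> \<rho>\<close> by blast
qed simp

end
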